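(* Let $\mathbf{RN}$ be a regulatory network, $z$ a regular parameter and $\ell$ the associated wall-labeling. Let $\mathcal F_W$, $\mathcal F_{WD}$ and $\mathcal F_D$ be the wall graph, wall-domain graph and domain graph induced by $\ell$. Then the Morse graphs $\mathsf{MG}(\mathcal F_W)$, $\mathsf{MG}(\mathcal F_{WD})$ and $\mathsf{MG}(\mathcal F_D)$ are isomorphic.
   Context: Regulatory network: $\mathbf{RN}=(V,E)$, $V=\{1,\dots,N\}$. Edges $(i,j)$ are activations $i\to j$ or repressions $i\dashv j$, with at most one per ordered pair and (standing assumption) no $i\dashv i$. Set $\mathbf S(n)=\{i:(i,n)\in E\}$ and $\mathbf T(n)=\{j:(n,j)\in E\}$. Node $j$ has a logic $M_j$ (the polynomial from an AND/OR expression without negation using each variable of $\mathbf S(j)$ once, via AND $\mapsto$ product and OR $\mapsto$ sum). Parameter: $z=(l,u,\theta,\gamma)$, consisting of $l_{j,i},u_{j,i},\theta_{j,i}$ per edge $(i,j)$ and $\gamma_i$ per node. Switching nonlinearity: $\sigma_{j,i}(x)=l_{j,i}$ if ($i\to j$, $x_i<\theta_{j,i}$) or ($i\dashv j$, $x_i>\theta_{j,i}$). It equals $u_{j,i}$ if ($i\to j$, $x_i>\theta_{j,i}$) or ($i\dashv j$, $x_i<\theta_{j,i}$). $\Lambda_j(x)=M_j((\sigma_{j,i}(x))_{i\in\mathbf S(j)})$. Fundamental cells: with $\theta_{-\infty,i}=0$ and $\theta_{\infty,i}=\infty$, a cell is $\kappa=\prod_i(\theta_{a_i,i},\theta_{b_i,i})$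 with consecutive thresholds. $\Lambda(\kappa)$ is the constant value of $\Lambda$ on $\kappa$. Left faces (for $a_k\in V$) replace the $k$-th factor by $\{\theta_{a_k,k}\}$; right faces (for $b_k\in V$) use $\{\theta_{b_k,k}\}$. Each face has projection index $k$ and switching index $a_k$ resp. $b_k$. Regular parameter: - $0<l<u$, $\gamma>0$ and $\theta>0$; - distinct $\theta_{j,i}$ for fixed $i$; - $\Lambda_i(\kappa)\ne\gamma_i\theta_{j,i}$ for each face threshold $\theta_{j,i}$ of $\kappa$. A cell $\kappa$ is attracting if $\Gamma^{-1}\Lambda(\kappa)\in\kappa$, where $\Gamma=\mathrm{diag}(\gamma_i)$. Walls: a wall is a pair $(\tau,\kappa)$ with $\tau$ a face of $\kappa$. $\mathrm{sgn}(\tau,\kappa)=\pm1$ for left/right faces. $\ell(\tau,\kappa)=\mathrm{sgn}(\tau,\kappa)\,\mathrm{sgn}(-\gamma_i\theta_{j,i}+\Lambda_i(\kappa))$ ($i$ projection index, $j$ switching index). $\ell=1$ means entrance and $\ell=-1$ absorbing. Wall graph: its vertices are the attracting cells and all faces of all cells. There is an edge $\tau\to\tau'$ whenever some cell $\kappa$ has $(\tau,\kappa)$ entrance and $(\tau',\kappa)$ absorbing. For each attracting $\kappa$ there are edges $\kappa\to\kappa$ and $\tau\to\kappa$ for every wall $(\tau,\kappa)$. Domain graph: its vertices are all cells. There is an edge $\kappa\to\kappa$ if $\kappa$ is attracting, and an edge $\kappa\to\kappa'$ if some face $\tau$ has $(\tau,\kappa)$ absorbing and $(\tau,\kappa')$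 entrance. Wall-domain graph: its vertices are all cells and all faces. There is an edge $\kappa\to\tau$ if $(\tau,\kappa)$ is absorbing, an edge $\tau\to\kappa$ if $(\tau,\kappa)$ is entrance, and an edge $\kappa\to\kappa$ if $\kappa$ is attracting. Morse graph of a directed graph $\mathcal F$: - A recurrent component (Morse set) is a maximal vertex set $\mathcal C$ such that for all $u,v\in\mathcal C$ there is a non-empty path from $u$ to $v$ within $\mathcal C$. - Morse sets are partially ordered by $q\le p$ iff there is a path in $\mathcal F$ from an element of $\mathcal M(p)$ to an element of $\mathcal M(q)$. - $\mathsf{MG}(\mathcal F)$ is the Hasse diagram of this poset. *)

theory Defs
  imports "HOL-Analysis.Analysis"
begin

text \<open>Nodes are the elements of a finite type 'v (playing the role of V = {1..N}).
  An edge (i,j) means i regulates j; Act are the activations i -> j,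
  Rep the repressions i -| j.\<close>

definition src :: "('v \<times> 'v) set \<Rightarrow> 'v \<Rightarrow> 'v set" where
  "src E n = {i. (i, n) \<in> E}"

definition tgt :: "('v \<times> 'v) set \<Rightarrow> 'v \<Rightarrow> 'v set" where
  "tgt E n = {j. (n, j) \<in> E}"

datatype 'v lexpr = LVar 'v | LAnd "'v lexpr" "'v lexpr" | LOr "'v lexpr" "'v lexpr"

fun lvars :: "'v lexpr \<Rightarrow> 'v list" where
  "lvars (LVar i) = [i]"
| "lvars (LAnd e f) = lvars e @ lvars f"
| "lvars (LOr e f) = lvars e @ lvars f"

fun leval :: "('v \<Rightarrow> real) \<Rightarrow> 'v lexpr \<Rightarrow> real" where
  "leval s (LVar i) = s i"
| "leval s (LAnd e f) = leval s e * leval s f"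
| "leval s (LOr e f) = leval s e + leval s f"

definition valid_logic :: "'v set \<Rightarrow> 'v lexpr \<Rightarrow> bool" where
  "valid_logic S e \<longleftrightarrow> distinct (lvars e) \<and> set (lvars e) = S"

definition reg_network :: "('v \<times> 'v) set \<Rightarrow> ('v \<times> 'v) set \<Rightarrow> ('v \<Rightarrow> 'v lexpr) \<Rightarrow> bool" where
  "reg_network Act Rep M \<longleftrightarrow>
     Act \<inter> Rep = {} \<and> (\<forall>i. (i, i) \<notin> Rep) \<and>
     (\<forall>j. valid_logic (src (Act \<union> Rep) j) (M j))"

text \<open>Parameters: l j i, u j i, theta j i stand for l_{j,i}, u_{j,i}, theta_{j,i} for the edge (i,j);
  gamma i for gamma_i. The value of sigma exactly on a threshold is irrelevant
  (it is never used on cells).\<close>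

definition sigma :: "('v \<times> 'v) set \<Rightarrow> ('v \<Rightarrow> 'v \<Rightarrow> real) \<Rightarrow> ('v \<Rightarrow> 'v \<Rightarrow> real) \<Rightarrow> ('v \<Rightarrow> 'v \<Rightarrow> real)
     \<Rightarrow> 'v \<Rightarrow> 'v \<Rightarrow> ('v \<Rightarrow> real) \<Rightarrow> real" where
  "sigma Act l u \<theta> j i x =
     (if (i, j) \<in> Act then (if x i < \<theta> j i then l j i else u j i)
      else (if x i > \<theta> j i then l j i else u j i))"

definition Lam :: "('v \<times> 'v) set \<Rightarrow> ('v \<Rightarrow> 'v lexpr) \<Rightarrow> ('v \<Rightarrow> 'v \<Rightarrow> real) \<Rightarrow> ('v \<Rightarrow> 'v \<Rightarrow> real)
     \<Rightarrow> ('v \<Rightarrow> 'v \<Rightarrow> real) \<Rightarrow> 'v \<Rightarrow> ('v \<Rightarrow> real) \<Rightarrow> real" where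
  "Lam Act M l u \<theta> j x = leval (\<lambda>i. sigma Act l u \<theta> j i x) (M j)"

text \<open>Threshold indices: Minf stands for -infinity (threshold 0), Pinf for +infinity,
  Thr j for theta_{j,i}.\<close>
datatype 'v tidx = Minf | Thr 'v | Pinf

fun thr :: "('v \<Rightarrow> 'v \<Rightarrow> real) \<Rightarrow> 'v \<Rightarrow> 'v tidx \<Rightarrow> ereal" where
  "thr \<theta> i Minf = 0"
| "thr \<theta> i (Thr j) = ereal (\<theta> j i)"
| "thr \<theta> i Pinf = \<infinity>"

type_synonym 'v box = "'v \<Rightarrow> 'v tidx \<times> 'v tidx"

definition is_cell :: "('v \<times> 'v) set \<Rightarrow> ('v \<Rightarrow> 'v \<Rightarrow> real) \<Rightarrow> 'v box \<Rightarrow> bool" where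
  "is_cell E \<theta> \<kappa> \<longleftrightarrow> (\<forall>i.
     (fst (\<kappa> i) = Minf \<or> (\<exists>j. fst (\<kappa> i) = Thr j \<and> j \<in> tgt E i)) \<and>
     (snd (\<kappa> i) = Pinf \<or> (\<exists>j. snd (\<kappa> i) = Thr j \<and> j \<in> tgt E i)) \<and>
     thr \<theta> i (fst (\<kappa> i)) < thr \<theta> i (snd (\<kappa> i)) \<and>
     (\<forall>j\<in>tgt E i. \<not> (thr \<theta> i (fst (\<kappa> i)) < ereal (\<theta> j i) \<and> ereal (\<theta> j i) < thr \<theta> i (snd (\<kappa> i)))))"

definition cell_pts :: "('v \<Rightarrow> 'v \<Rightarrow> real) \<Rightarrow> 'v box \<Rightarrow> ('v \<Rightarrow> real) set" where
  "cell_pts \<theta> \<kappa> = {x. \<forall>i. thr \<theta> i (fst (\<kappa> i)) < ereal (x i) \<and> ereal (x i) < thr \<theta> i (snd (\<kappa> i))}"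

text \<open>Lambda(kappa): the (constant) value of Lambda on the cell.\<close>
definition LamCell :: "('v \<times> 'v) set \<Rightarrow> ('v \<Rightarrow> 'v lexpr) \<Rightarrow> ('v \<Rightarrow> 'v \<Rightarrow> real) \<Rightarrow> ('v \<Rightarrow> 'v \<Rightarrow> real)
     \<Rightarrow> ('v \<Rightarrow> 'v \<Rightarrow> real) \<Rightarrow> 'v \<Rightarrow> 'v box \<Rightarrow> real" where
  "LamCell Act M l u \<theta> j \<kappa> = Lam Act M l u \<theta> j (SOME x. x \<in> cell_pts \<theta> \<kappa>)"

definition attracting where
  "attracting Act Rep M l u \<theta> \<gamma> \<kappa> \<longleftrightarrow> is_cell (Act \<union> Rep) \<theta> \<kappa> \<and>
     (\<lambda>i. LamCell Act M l u \<theta> i \<kappa> / \<gamma> i) \<in> cell_pts \<theta> \<kappa>"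

text \<open>wall E theta tau kappa k j s: tau is a face of the cell kappa, obtained by replacing the k-th
  factor by the threshold theta_{j,k}; k is the projection index, j the switching index, and
  s = sgn(tau,kappa) = 1 for a left face, -1 for a right face.  A face is represented by the box
  of kappa whose k-th coordinate is replaced by (Thr j, Thr j), i.e. by the singleton {theta_{j,k}};
  hence a face shared by two adjacent cells gets the same representation.\<close>
definition wall :: "('v \<times> 'v) set \<Rightarrow> ('v \<Rightarrow> 'v \<Rightarrow> real) \<Rightarrow> 'v box \<Rightarrow> 'v box \<Rightarrow> 'v \<Rightarrow> 'v \<Rightarrow> int \<Rightarrow> bool" where
  "wall E \<theta> \<tau> \<kappa> k j s \<longleftrightarrow> is_cell E \<theta> \<kappa> \<and>
     ((fst (\<kappa> k) = Thr j \<and> s = 1) \<or> (snd (\<kappa> k) = Thr j \<and> s = -1)) \<and>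
     \<tau> = \<kappa>(k := (Thr j, Thr j))"

definition is_face where
  "is_face E \<theta> \<tau> \<longleftrightarrow> (\<exists>\<kappa> k j s. wall E \<theta> \<tau> \<kappa> k j s)"

definition wlabel where
  "wlabel Act Rep M l u \<theta> \<gamma> \<tau> \<kappa> =
     (THE v. \<exists>k j s. wall (Act \<union> Rep) \<theta> \<tau> \<kappa> k j s \<and>
        v = real_of_int s * sgn (- \<gamma> k * \<theta> j k + LamCell Act M l u \<theta> k \<kappa>))"

definition entrance where
  "entrance Act Rep M l u \<theta> \<gamma> \<tau> \<kappa> \<longleftrightarrow>
     (\<exists>k j s. wall (Act \<union> Rep) \<theta> \<tau> \<kappa> k j s) \<and> wlabel Act Rep M l u \<theta> \<gamma> \<tau> \<kappa> = 1"

definition absorbing where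
  "absorbing Act Rep M l u \<theta> \<gamma> \<tau> \<kappa> \<longleftrightarrow>
     (\<exists>k j s. wall (Act \<union> Rep) \<theta> \<tau> \<kappa> k j s) \<and> wlabel Act Rep M l u \<theta> \<gamma> \<tau> \<kappa> = -1"

definition regular_param where
  "regular_param Act Rep M l u \<theta> \<gamma> \<longleftrightarrow>
     (\<forall>(i, j) \<in> Act \<union> Rep. 0 < l j i \<and> l j i < u j i \<and> 0 < \<theta> j i) \<and>
     (\<forall>i. 0 < \<gamma> i) \<and>
     (\<forall>i. inj_on (\<lambda>j. \<theta> j i) (tgt (Act \<union> Rep) i)) \<and>
     (\<forall>\<tau> \<kappa> k j s. wall (Act \<union> Rep) \<theta> \<tau> \<kappa> k j s \<longrightarrow> LamCell Act M l u \<theta> k \<kappa> \<noteq> \<gamma> k * \<theta> j k)"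

datatype 'v vert = Cell "'v box" | Face "'v box"

type_synonym 'a digraph = "'a set \<times> ('a \<times> 'a) set"

definition wall_graph :: "('v \<times> 'v) set \<Rightarrow> ('v \<times> 'v) set \<Rightarrow> ('v \<Rightarrow> 'v lexpr) \<Rightarrow> ('v \<Rightarrow> 'v \<Rightarrow> real)
   \<Rightarrow> ('v \<Rightarrow> 'v \<Rightarrow> real) \<Rightarrow> ('v \<Rightarrow> 'v \<Rightarrow> real) \<Rightarrow> ('v \<Rightarrow> real) \<Rightarrow> 'v vert digraph" where
  "wall_graph Act Rep M l u \<theta> \<gamma> =
    ({Cell \<kappa> | \<kappa>. attracting Act Rep M l u \<theta> \<gamma> \<kappa>} \<union> {Face \<tau> | \<tau>. is_face (Act \<union> Rep) \<theta> \<tau>},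
     {(Face \<tau>, Face \<tau>') | \<tau> \<tau>'. \<exists>\<kappa>. entrance Act Rep M l u \<theta> \<gamma> \<tau> \<kappa> \<and> absorbing Act Rep M l u \<theta> \<gamma> \<tau>' \<kappa>}
     \<union> {(Cell \<kappa>, Cell \<kappa>) | \<kappa>. attracting Act Rep M l u \<theta> \<gamma> \<kappa>}
     \<union> {(Face \<tau>, Cell \<kappa>) | \<tau> \<kappa>. attracting Act Rep M l u \<theta> \<gamma> \<kappa> \<and> (\<exists>k j s. wall (Act \<union> Rep) \<theta> \<tau> \<kappa> k j s)})"

definition domain_graph :: "('v \<times> 'v) set \<Rightarrow> ('v \<times> 'v) set \<Rightarrow> ('v \<Rightarrow> 'v lexpr) \<Rightarrow> ('v \<Rightarrow> 'v \<Rightarrow> real)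
   \<Rightarrow> ('v \<Rightarrow> 'v \<Rightarrow> real) \<Rightarrow> ('v \<Rightarrow> 'v \<Rightarrow> real) \<Rightarrow> ('v \<Rightarrow> real) \<Rightarrow> 'v vert digraph" where
  "domain_graph Act Rep M l u \<theta> \<gamma> =
    ({Cell \<kappa> | \<kappa>. is_cell (Act \<union> Rep) \<theta> \<kappa>},
     {(Cell \<kappa>, Cell \<kappa>) | \<kappa>. attracting Act Rep M l u \<theta> \<gamma> \<kappa>}
     \<union> {(Cell \<kappa>, Cell \<kappa>') | \<kappa> \<kappa>'. \<exists>\<tau>. absorbing Act Rep M l u \<theta> \<gamma> \<tau> \<kappa> \<and> entrance Act Rep M l u \<theta> \<gamma> \<tau> \<kappa>'})"

definition wall_domain_graph :: "('v \<times> 'v) set \<Rightarrow> ('v \<times> 'v) set \<Rightarrow> ('v \<Rightarrow> 'v lexpr) \<Rightarrow> ('v \<Rightarrow> 'v \<Rightarrow> real)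
   \<Rightarrow> ('v \<Rightarrow> 'v \<Rightarrow> real) \<Rightarrow> ('v \<Rightarrow> 'v \<Rightarrow> real) \<Rightarrow> ('v \<Rightarrow> real) \<Rightarrow> 'v vert digraph" where
  "wall_domain_graph Act Rep M l u \<theta> \<gamma> =
    ({Cell \<kappa> | \<kappa>. is_cell (Act \<union> Rep) \<theta> \<kappa>} \<union> {Face \<tau> | \<tau>. is_face (Act \<union> Rep) \<theta> \<tau>},
     {(Cell \<kappa>, Face \<tau>) | \<kappa> \<tau>. absorbing Act Rep M l u \<theta> \<gamma> \<tau> \<kappa>}
     \<union> {(Face \<tau>, Cell \<kappa>) | \<tau> \<kappa>. entrance Act Rep M l u \<theta> \<gamma> \<tau> \<kappa>}
     \<union> {(Cell \<kappa>, Cell \<kappa>) | \<kappa>. attracting Act Rep M l u \<theta> \<gamma> \<kappa>})"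

definition recurrent_set :: "'a digraph \<Rightarrow> 'a set \<Rightarrow> bool" where
  "recurrent_set F C \<longleftrightarrow> C \<subseteq> fst F \<and> C \<noteq> {} \<and>
     (\<forall>u\<in>C. \<forall>v\<in>C. (u, v) \<in> (snd F \<inter> (C \<times> C))\<^sup>+)"

definition morse_sets :: "'a digraph \<Rightarrow> 'a set set" where
  "morse_sets F = {C. recurrent_set F C \<and> (\<forall>D. recurrent_set F D \<and> C \<subseteq> D \<longrightarrow> D = C)}"

definition morse_le :: "'a digraph \<Rightarrow> 'a set \<Rightarrow> 'a set \<Rightarrow> bool" where
  "morse_le F q p \<longleftrightarrow> (\<exists>x\<in>p. \<exists>y\<in>q. (x, y) \<in> (snd F)\<^sup>*)"

definition mg_edge :: "'a digraph \<Rightarrow> 'a set \<Rightarrow> 'a set \<Rightarrow> bool" where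
  "mg_edge F p q \<longleftrightarrow> p \<in> morse_sets F \<and> q \<in> morse_sets F \<and>
     morse_le F q p \<and> q \<noteq> p \<and>
     \<not> (\<exists>r\<in>morse_sets F. morse_le F q r \<and> morse_le F r p \<and> r \<noteq> q \<and> r \<noteq> p)"

definition mg_isomorphic :: "'a digraph \<Rightarrow> 'b digraph \<Rightarrow> bool" where
  "mg_isomorphic F G \<longleftrightarrow> (\<exists>f. bij_betw f (morse_sets F) (morse_sets G) \<and>
     (\<forall>p\<in>morse_sets F. \<forall>q\<in>morse_sets F. mg_edge F p q \<longleftrightarrow> mg_edge G (f p) (f q)))"

end

theory Submission
  imports Defs
begin

text \<open>The Morse sets of a digraph are the classes of mutually reachable vertices lying on
  cycles, ordered by reachability. So if the vertices of G lie in H, reachability in G is the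
  restriction of reachability in H, and every Morse set of H meets G, then C \<mapsto> C \<inter> V(G) is an
  isomorphism of Morse graphs. The domain graph arises from the wall-domain graph in this way by
  contracting the paths \<kappa> \<rightarrow> \<tau> \<rightarrow> \<kappa>'; a face on a cycle is followed by a cell. The wall graph
  arises by contracting \<tau> \<rightarrow> \<kappa> \<rightarrow> \<tau>'. Since \<gamma> > 0, every wall of an attracting cell is an
  entrance, so an attracting cell is left only through its loop, and a non-attracting cell on a
  cycle is followed by a face.\<close>

definition scc :: "'a digraph \<Rightarrow> 'a \<Rightarrow> 'a set" where
  "scc F x = {y. (x, y) \<in> (snd F)\<^sup>+ \<and> (y, x) \<in> (snd F)\<^sup>+}"

lemma trancl_restrict_between:
  assumes "(a, b) \<in> E\<^sup>+"
    and between: "\<And>c. (a, c) \<in> E\<^sup>* \<Longrightarrow> (c, b) \<in> E\<^sup>* \<Longrightarrow> c \<in> C"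
  shows "(a, b) \<in> (E \<inter> C \<times> C)\<^sup>+"
proof -
  have "(d, b) \<in> E\<^sup>* \<Longrightarrow> (a, d) \<in> (E \<inter> C \<times> C)\<^sup>+" if "(a, d) \<in> E\<^sup>+" for d
    using that
  proof (induction rule: trancl_induct)
    case (base d)
    then have "a \<in> C" "d \<in> C" using between by (auto intro: converse_rtrancl_into_rtrancl)
    then show ?case using base by (simp add: r_into_trancl)
  next
    case (step c d)
    have "(c, b) \<in> E\<^sup>*" using step by (meson converse_rtrancl_into_rtrancl)
    moreover have "(a, c) \<in> E\<^sup>*" "(a, d) \<in> E\<^sup>*" using step by auto
    ultimately show ?case
      using step between by (simp add: trancl_into_trancl)
  qed
  then show ?thesis using assms(1) by blast
qed

lemma trancl_subset_trancl: "r \<subseteq> s\<^sup>+ \<Longrightarrow> r\<^sup>+ \<subseteq> s\<^sup>+"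
  using trancl_mono_subset[of r "s\<^sup>+"] by simp

lemma recurrent_set_scc:
  assumes "snd F \<subseteq> fst F \<times> fst F" and "(x, x) \<in> (snd F)\<^sup>+"
  shows "recurrent_set F (scc F x)"
  unfolding recurrent_set_def
proof (intro conjI ballI)
  show "scc F x \<subseteq> fst F" using assms(1) by (auto simp: scc_def dest: tranclD)
  show "scc F x \<noteq> {}" using assms(2) by (auto simp: scc_def)
next
  fix a b assume a: "a \<in> scc F x" and b: "b \<in> scc F x"
  show "(a, b) \<in> (snd F \<inter> scc F x \<times> scc F x)\<^sup>+"
  proof (rule trancl_restrict_between)
    show "(a, b) \<in> (snd F)\<^sup>+" using a b by (auto simp: scc_def intro: trancl_trans)
    fix c assume "(a, c) \<in> (snd F)\<^sup>*" "(c, b) \<in> (snd F)\<^sup>*"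
    then show "c \<in> scc F x"
      using a b unfolding scc_def by (blast intro: trancl_rtrancl_trancl rtrancl_trancl_trancl)
  qed
qed

lemma morse_set_strongly_connected:
  assumes "C \<in> morse_sets F" "a \<in> C" "b \<in> C"
  shows "(a, b) \<in> (snd F)\<^sup>+"
  using assms trancl_mono_subset[OF Int_lower1, of "snd F" "C \<times> C"]
  by (auto simp: morse_sets_def recurrent_set_def)

lemma morse_set_nonempty: "C \<in> morse_sets F \<Longrightarrow> C \<noteq> {}"
  by (simp add: morse_sets_def recurrent_set_def)

lemma morse_set_subset_vertices: "C \<in> morse_sets F \<Longrightarrow> C \<subseteq> fst F"
  by (simp add: morse_sets_def recurrent_set_def)

lemma morse_set_eq_scc:
  assumes "snd F \<subseteq> fst F \<times> fst F" "C \<in> morse_sets F" "x \<in> C"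
  shows "C = scc F x"
proof -
  have "C \<subseteq> scc F x"
    using morse_set_strongly_connected[OF assms(2,3)] morse_set_strongly_connected[OF assms(2) _ assms(3)]
    by (auto simp: scc_def)
  moreover have "recurrent_set F (scc F x)"
    using recurrent_set_scc[OF assms(1) morse_set_strongly_connected[OF assms(2,3,3)]] .
  ultimately show ?thesis using assms(2) by (auto simp: morse_sets_def)
qed

lemma scc_in_morse_sets:
  assumes E: "snd F \<subseteq> fst F \<times> fst F" and "(x, x) \<in> (snd F)\<^sup>+"
  shows "scc F x \<in> morse_sets F"
  unfolding morse_sets_def
proof (intro CollectI conjI allI impI)
  show rec: "recurrent_set F (scc F x)" by (rule recurrent_set_scc[OF assms])
  fix D assume D: "recurrent_set F D \<and> scc F x \<subseteq> D"
  have "x \<in> D" using D assms(2) by (auto simp: scc_def)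
  then have "D \<subseteq> scc F x"
    using D trancl_mono_subset[OF Int_lower1, of "snd F" "D \<times> D"]
    by (auto simp: recurrent_set_def scc_def)
  then show "D = scc F x" using D by blast
qed

lemma morse_set_successor:
  assumes "C \<in> morse_sets F" "x \<in> C"
  obtains y where "(x, y) \<in> snd F" "y \<in> C"
proof -
  have "(x, x) \<in> (snd F \<inter> C \<times> C)\<^sup>+"
    using assms by (auto simp: morse_sets_def recurrent_set_def)
  then show ?thesis using that by (auto dest: tranclD)
qed

lemma morse_le_iff_rtrancl:
  assumes "p \<in> morse_sets F" "q \<in> morse_sets F" "x \<in> p" "y \<in> q"
  shows "morse_le F q p \<longleftrightarrow> (x, y) \<in> (snd F)\<^sup>*"
proof
  assume "morse_le F q p"
  then obtain a b where "a \<in> p" "b \<in> q" "(a, b) \<in> (snd F)\<^sup>*"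
    by (auto simp: morse_le_def)
  have "(x, a) \<in> (snd F)\<^sup>*" "(b, y) \<in> (snd F)\<^sup>*"
    using morse_set_strongly_connected[OF assms(1,3) \<open>a \<in> p\<close>]
      morse_set_strongly_connected[OF assms(2) \<open>b \<in> q\<close> assms(4)] by auto
  with \<open>(a, b) \<in> (snd F)\<^sup>*\<close> show "(x, y) \<in> (snd F)\<^sup>*"
    by (meson rtrancl_trans)
qed (use assms in \<open>auto simp: morse_le_def\<close>)

lemma mg_isomorphic_if_order_iso:
  assumes bij: "bij_betw f (morse_sets F) (morse_sets G)"
    and le: "\<And>p q. p \<in> morse_sets F \<Longrightarrow> q \<in> morse_sets F \<Longrightarrow>
      morse_le G (f q) (f p) \<longleftrightarrow> morse_le F q p"
  shows "mg_isomorphic F G"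
proof -
  have img: "morse_sets G = f ` morse_sets F" and inj: "inj_on f (morse_sets F)"
    using bij by (auto simp: bij_betw_def)
  have "mg_edge F p q \<longleftrightarrow> mg_edge G (f p) (f q)"
    if "p \<in> morse_sets F" "q \<in> morse_sets F" for p q
    using that unfolding mg_edge_def img by (auto simp: le inj_on_eq_iff[OF inj])
  then show ?thesis using bij unfolding mg_isomorphic_def by blast
qed

lemma mg_isomorphic_sym:
  assumes "mg_isomorphic F G"
  shows "mg_isomorphic G F"
proof -
  obtain f where bij: "bij_betw f (morse_sets F) (morse_sets G)"
    and edge: "\<forall>p\<in>morse_sets F. \<forall>q\<in>morse_sets F. mg_edge F p q \<longleftrightarrow> mg_edge G (f p) (f q)"
    using assms unfolding mg_isomorphic_def by blast
  define g where "g = the_inv_into (morse_sets F) f"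
  have g: "bij_betw g (morse_sets G) (morse_sets F)"
    unfolding g_def by (rule bij_betw_the_inv_into[OF bij])
  have fg: "f (g p) = p" if "p \<in> morse_sets G" for p
    using that bij unfolding g_def bij_betw_def by (simp add: f_the_inv_into_f)
  have "mg_edge G p q \<longleftrightarrow> mg_edge F (g p) (g q)" if "p \<in> morse_sets G" "q \<in> morse_sets G" for p q
    using that edge bij_betw_apply[OF g] fg by metis
  then show ?thesis using g unfolding mg_isomorphic_def by blast
qed

lemma mg_isomorphic_trans:
  assumes "mg_isomorphic F G" "mg_isomorphic G H"
  shows "mg_isomorphic F H"
proof -
  obtain f where f: "bij_betw f (morse_sets F) (morse_sets G)"
    "\<forall>p\<in>morse_sets F. \<forall>q\<in>morse_sets F. mg_edge F p q \<longleftrightarrow> mg_edge G (f p) (f q)"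
    using assms(1) unfolding mg_isomorphic_def by blast
  obtain g where g: "bij_betw g (morse_sets G) (morse_sets H)"
    "\<forall>p\<in>morse_sets G. \<forall>q\<in>morse_sets G. mg_edge G p q \<longleftrightarrow> mg_edge H (g p) (g q)"
    using assms(2) unfolding mg_isomorphic_def by blast
  have "mg_edge F p q \<longleftrightarrow> mg_edge H (g (f p)) (g (f q))"
    if "p \<in> morse_sets F" "q \<in> morse_sets F" for p q
    using that f g bij_betw_apply[OF f(1)] by blast
  then show ?thesis
    using bij_betw_trans[OF f(1) g(1)] unfolding mg_isomorphic_def by auto
qed

locale reach_embedding =
  fixes G H :: "'a digraph"
  assumes G_edges: "snd G \<subseteq> fst G \<times> fst G" and H_edges: "snd H \<subseteq> fst H \<times> fst H"
    and trancl_iff: "x \<in> fst G \<Longrightarrow> y \<in> fst G \<Longrightarrow> (x, y) \<in> (snd G)\<^sup>+ \<longleftrightarrow> (x, y) \<in> (snd H)\<^sup>+"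
begin

lemma rtrancl_iff: "x \<in> fst G \<Longrightarrow> y \<in> fst G \<Longrightarrow> (x, y) \<in> (snd G)\<^sup>* \<longleftrightarrow> (x, y) \<in> (snd H)\<^sup>*"
  using trancl_iff by (auto simp: rtrancl_eq_or_trancl)

lemma scc_eq_restrict:
  assumes x: "x \<in> fst G"
  shows "scc G x = scc H x \<inter> fst G"
proof -
  have "y \<in> fst G" if "(x, y) \<in> (snd G)\<^sup>+" for y
    using that G_edges by (auto dest: tranclD2)
  then show ?thesis using trancl_iff[OF x] trancl_iff[of _ x, OF _ x]
    by (auto simp: scc_def)
qed

lemma restrict_morse_set:
  assumes C: "C \<in> morse_sets H" and x: "x \<in> C" "x \<in> fst G"
  shows "C \<inter> fst G \<in> morse_sets G"
proof -
  have "(x, x) \<in> (snd G)\<^sup>+"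
    using trancl_iff[OF x(2) x(2)] morse_set_strongly_connected[OF C x(1) x(1)] by simp
  then have "scc G x \<in> morse_sets G" by (rule scc_in_morse_sets[OF G_edges])
  then show ?thesis using morse_set_eq_scc[OF H_edges C x(1)] scc_eq_restrict[OF x(2)] by simp
qed

lemma morse_set_eq_restrict:
  assumes D: "D \<in> morse_sets G"
  obtains C where "C \<in> morse_sets H" "D = C \<inter> fst G"
proof -
  obtain x where x: "x \<in> D" using morse_set_nonempty[OF D] by blast
  have xG: "x \<in> fst G" using morse_set_subset_vertices[OF D] x ..
  have "(x, x) \<in> (snd H)\<^sup>+"
    using trancl_iff[OF xG xG] morse_set_strongly_connected[OF D x x] by simp
  then have "scc H x \<in> morse_sets H" by (rule scc_in_morse_sets[OF H_edges])
  moreover have "D = scc H x \<inter> fst G"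
    using morse_set_eq_scc[OF G_edges D x] scc_eq_restrict[OF xG] by simp
  ultimately show ?thesis using that by blast
qed

context
  assumes meets: "\<And>C. C \<in> morse_sets H \<Longrightarrow> C \<inter> fst G \<noteq> {}"
begin

lemma bij_betw_restrict_morse_sets: "bij_betw (\<lambda>C. C \<inter> fst G) (morse_sets H) (morse_sets G)"
proof (rule bij_betw_imageI)
  show "inj_on (\<lambda>C. C \<inter> fst G) (morse_sets H)"
  proof (rule inj_onI)
    fix C D assume C: "C \<in> morse_sets H" and D: "D \<in> morse_sets H"
      and eq: "C \<inter> fst G = D \<inter> fst G"
    obtain x where "x \<in> C" "x \<in> fst G" using meets[OF C] by blast
    then show "C = D" using morse_set_eq_scc[OF H_edges C] morse_set_eq_scc[OF H_edges D] eq by blast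
  qed
  show "(\<lambda>C. C \<inter> fst G) ` morse_sets H = morse_sets G"
  proof (intro subset_antisym subsetI)
    fix D assume "D \<in> (\<lambda>C. C \<inter> fst G) ` morse_sets H"
    then obtain C where C: "C \<in> morse_sets H" and D: "D = C \<inter> fst G" by blast
    obtain x where "x \<in> C" "x \<in> fst G" using meets[OF C] by blast
    then show "D \<in> morse_sets G" using restrict_morse_set[OF C] D by simp
  next
    fix D assume "D \<in> morse_sets G"
    then show "D \<in> (\<lambda>C. C \<inter> fst G) ` morse_sets H" by (auto elim: morse_set_eq_restrict)
  qed
qed

lemma morse_le_restrict_iff:
  assumes p: "p \<in> morse_sets H" and q: "q \<in> morse_sets H"
  shows "morse_le G (q \<inter> fst G) (p \<inter> fst G) \<longleftrightarrow> morse_le H q p"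
proof -
  obtain x where x: "x \<in> p" "x \<in> fst G" using meets[OF p] by blast
  obtain y where y: "y \<in> q" "y \<in> fst G" using meets[OF q] by blast
  have "morse_le G (q \<inter> fst G) (p \<inter> fst G) \<longleftrightarrow> (x, y) \<in> (snd G)\<^sup>*"
    using morse_le_iff_rtrancl[OF restrict_morse_set[OF p x] restrict_morse_set[OF q y]] x y by simp
  also have "\<dots> \<longleftrightarrow> (x, y) \<in> (snd H)\<^sup>*" using rtrancl_iff[OF x(2) y(2)] .
  also have "\<dots> \<longleftrightarrow> morse_le H q p" using morse_le_iff_rtrancl[OF p q x(1) y(1)] by simp
  finally show ?thesis .
qed

lemma mg_isomorphic_restrict: "mg_isomorphic H G"
  using bij_betw_restrict_morse_sets morse_le_restrict_iff by (rule mg_isomorphic_if_order_iso)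

end

end

lemma wall_is_cell: "wall E \<theta> \<tau> \<kappa> k j s \<Longrightarrow> is_cell E \<theta> \<kappa>"
  by (simp add: wall_def)

lemma wall_is_face: "wall E \<theta> \<tau> \<kappa> k j s \<Longrightarrow> is_face E \<theta> \<tau>"
  by (auto simp: is_face_def)

locale switching_system =
  fixes Act Rep :: "('v \<times> 'v) set" and M :: "'v \<Rightarrow> 'v lexpr"
    and l u \<theta> :: "'v \<Rightarrow> 'v \<Rightarrow> real" and \<gamma> :: "'v \<Rightarrow> real"
  assumes gamma_pos: "0 < \<gamma> i"
begin

abbreviation "ATT \<equiv> attracting Act Rep M l u \<theta> \<gamma>"
abbreviation "ENT \<equiv> entrance Act Rep M l u \<theta> \<gamma>"
abbreviation "ABS \<equiv> absorbing Act Rep M l u \<theta> \<gamma>"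
abbreviation "WG \<equiv> wall_graph Act Rep M l u \<theta> \<gamma>"
abbreviation "WDG \<equiv> wall_domain_graph Act Rep M l u \<theta> \<gamma>"
abbreviation "DG \<equiv> domain_graph Act Rep M l u \<theta> \<gamma>"

lemma attracting_wall_sign:
  assumes "ATT \<kappa>" "wall (Act \<union> Rep) \<theta> \<tau> \<kappa> k j s"
  shows "real_of_int s * sgn (- \<gamma> k * \<theta> j k + LamCell Act M l u \<theta> k \<kappa>) = 1"
proof -
  define L where "L = LamCell Act M l u \<theta> k \<kappa>"
  have target: "thr \<theta> k (fst (\<kappa> k)) < ereal (L / \<gamma> k)" "ereal (L / \<gamma> k) < thr \<theta> k (snd (\<kappa> k))"
    using assms(1) by (auto simp: attracting_def cell_pts_def L_def)
  have g: "0 < \<gamma> k" by (rule gamma_pos)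
  from assms(2) consider "fst (\<kappa> k) = Thr j" "s = 1" | "snd (\<kappa> k) = Thr j" "s = -1"
    by (auto simp: wall_def)
  then show ?thesis
  proof cases
    case 1
    then have "\<gamma> k * \<theta> j k < L" using target(1) g by (simp add: field_simps)
    then show ?thesis using 1 by (simp add: L_def)
  next
    case 2
    then have "L < \<gamma> k * \<theta> j k" using target(2) g by (simp add: field_simps)
    then show ?thesis using 2 by (simp add: L_def)
  qed
qed

lemma entrance_if_attracting:
  assumes "ATT \<kappa>" "wall (Act \<union> Rep) \<theta> \<tau> \<kappa> k j s"
  shows "ENT \<tau> \<kappa>"
proof -
  have "wlabel Act Rep M l u \<theta> \<gamma> \<tau> \<kappa> = 1"
    unfolding wlabel_def
    by (rule the_equality) (use assms attracting_wall_sign[OF assms(1)] in metis)+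
  then show ?thesis using assms unfolding entrance_def by blast
qed

lemma not_absorbing_if_attracting: "ATT \<kappa> \<Longrightarrow> \<not> ABS \<tau> \<kappa>"
  using entrance_if_attracting unfolding absorbing_def entrance_def by fastforce

lemma wall_graph_vertex_iff:
  "x \<in> fst WG \<longleftrightarrow> (\<exists>\<kappa>. x = Cell \<kappa> \<and> ATT \<kappa>) \<or> (\<exists>\<tau>. x = Face \<tau> \<and> is_face (Act \<union> Rep) \<theta> \<tau>)"
  by (auto simp: wall_graph_def)

lemma wall_domain_graph_vertex_iff:
  "x \<in> fst WDG \<longleftrightarrow>
    (\<exists>\<kappa>. x = Cell \<kappa> \<and> is_cell (Act \<union> Rep) \<theta> \<kappa>) \<or> (\<exists>\<tau>. x = Face \<tau> \<and> is_face (Act \<union> Rep) \<theta> \<tau>)"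
  by (auto simp: wall_domain_graph_def)

lemma domain_graph_vertex_iff:
  "x \<in> fst DG \<longleftrightarrow> (\<exists>\<kappa>. x = Cell \<kappa> \<and> is_cell (Act \<union> Rep) \<theta> \<kappa>)"
  by (auto simp: domain_graph_def)

lemma wall_graph_edge_iff:
  "(a, b) \<in> snd WG \<longleftrightarrow>
    (\<exists>\<tau> \<tau>' \<kappa>. a = Face \<tau> \<and> b = Face \<tau>' \<and> ENT \<tau> \<kappa> \<and> ABS \<tau>' \<kappa>) \<or>
    (\<exists>\<kappa>. a = Cell \<kappa> \<and> b = Cell \<kappa> \<and> ATT \<kappa>) \<or>
    (\<exists>\<tau> \<kappa> k j s. a = Face \<tau> \<and> b = Cell \<kappa> \<and> ATT \<kappa> \<and> wall (Act \<union> Rep) \<theta> \<tau> \<kappa> k j s)"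
  by (auto simp: wall_graph_def)

lemma wall_domain_graph_edge_iff:
  "(a, b) \<in> snd WDG \<longleftrightarrow>
    (\<exists>\<kappa> \<tau>. a = Cell \<kappa> \<and> b = Face \<tau> \<and> ABS \<tau> \<kappa>) \<or>
    (\<exists>\<tau> \<kappa>. a = Face \<tau> \<and> b = Cell \<kappa> \<and> ENT \<tau> \<kappa>) \<or>
    (\<exists>\<kappa>. a = Cell \<kappa> \<and> b = Cell \<kappa> \<and> ATT \<kappa>)"
  by (auto simp: wall_domain_graph_def)

lemma domain_graph_edge_iff:
  "(a, b) \<in> snd DG \<longleftrightarrow>
    (\<exists>\<kappa>. a = Cell \<kappa> \<and> b = Cell \<kappa> \<and> ATT \<kappa>) \<or>
    (\<exists>\<kappa> \<kappa>' \<tau>. a = Cell \<kappa> \<and> b = Cell \<kappa>' \<and> ABS \<tau> \<kappa> \<and> ENT \<tau> \<kappa>')"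
  by (auto simp: domain_graph_def)

lemma wall_graph_edges_in_vertices: "snd WG \<subseteq> fst WG \<times> fst WG"
  by (fastforce simp: wall_graph_edge_iff wall_graph_vertex_iff entrance_def absorbing_def
      dest: wall_is_face)

lemma wall_domain_graph_edges_in_vertices: "snd WDG \<subseteq> fst WDG \<times> fst WDG"
  by (fastforce simp: wall_domain_graph_edge_iff wall_domain_graph_vertex_iff
      entrance_def absorbing_def attracting_def dest: wall_is_cell wall_is_face)

lemma domain_graph_edges_in_vertices: "snd DG \<subseteq> fst DG \<times> fst DG"
  by (fastforce simp: domain_graph_edge_iff domain_graph_vertex_iff
      entrance_def absorbing_def attracting_def dest: wall_is_cell)

lemma domain_edge_wall_domain_trancl: "snd DG \<subseteq> (snd WDG)\<^sup>+"
proof (rule subrelI)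
  fix a b assume "(a, b) \<in> snd DG"
  then consider (loop) \<kappa> where "a = Cell \<kappa>" "b = Cell \<kappa>" "ATT \<kappa>"
    | (cross) \<kappa> \<kappa>' \<tau> where "a = Cell \<kappa>" "b = Cell \<kappa>'" "ABS \<tau> \<kappa>" "ENT \<tau> \<kappa>'"
    unfolding domain_graph_edge_iff by blast
  then show "(a, b) \<in> (snd WDG)\<^sup>+"
  proof cases
    case loop
    then show ?thesis by (auto simp: wall_domain_graph_edge_iff)
  next
    case cross
    then have "(a, Face \<tau>) \<in> snd WDG" "(Face \<tau>, b) \<in> snd WDG"
      by (auto simp: wall_domain_graph_edge_iff)
    then show ?thesis by auto
  qed
qed

lemma wall_domain_trancl_from_cell:
  assumes "(Cell \<kappa>, z) \<in> (snd WDG)\<^sup>+"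
  shows "(\<exists>\<kappa>'. z = Cell \<kappa>' \<and> (Cell \<kappa>, z) \<in> (snd DG)\<^sup>+) \<or>
    (\<exists>\<tau> \<kappa>'. z = Face \<tau> \<and> (Cell \<kappa>, Cell \<kappa>') \<in> (snd DG)\<^sup>* \<and> ABS \<tau> \<kappa>')"
  using assms
proof (induction rule: trancl_induct)
  case (base z)
  then show ?case by (auto simp: wall_domain_graph_edge_iff domain_graph_edge_iff)
next
  case (step y z)
  from step.hyps(2) consider (exit) \<kappa>1 \<tau> where "y = Cell \<kappa>1" "z = Face \<tau>" "ABS \<tau> \<kappa>1"
    | (enter) \<tau> \<kappa>1 where "y = Face \<tau>" "z = Cell \<kappa>1" "ENT \<tau> \<kappa>1"
    | (loop) \<kappa>1 where "y = Cell \<kappa>1" "z = Cell \<kappa>1"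
    unfolding wall_domain_graph_edge_iff by blast
  then show ?case
  proof cases
    case exit
    then show ?thesis using step.IH by auto
  next
    case enter
    then obtain \<kappa>' where "(Cell \<kappa>, Cell \<kappa>') \<in> (snd DG)\<^sup>*" "ABS \<tau> \<kappa>'"
      using step.IH by auto
    moreover from this have "(Cell \<kappa>', z) \<in> snd DG"
      using enter by (auto simp: domain_graph_edge_iff)
    ultimately show ?thesis using enter by (auto intro: rtrancl_into_trancl1)
  next
    case loop
    then show ?thesis using step.IH by simp
  qed
qed

lemma cell_trancl_wall_domain_iff_domain:
  "(Cell \<kappa>, Cell \<kappa>') \<in> (snd WDG)\<^sup>+ \<longleftrightarrow> (Cell \<kappa>, Cell \<kappa>') \<in> (snd DG)\<^sup>+"
  using wall_domain_trancl_from_cell trancl_subset_trancl[OF domain_edge_wall_domain_trancl] by blast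

lemma reach_embedding_domain_wall_domain: "reach_embedding DG WDG"
proof
  show "snd DG \<subseteq> fst DG \<times> fst DG" by (rule domain_graph_edges_in_vertices)
  show "snd WDG \<subseteq> fst WDG \<times> fst WDG" by (rule wall_domain_graph_edges_in_vertices)
  fix x y assume "x \<in> fst DG" "y \<in> fst DG"
  then show "(x, y) \<in> (snd DG)\<^sup>+ \<longleftrightarrow> (x, y) \<in> (snd WDG)\<^sup>+"
    using cell_trancl_wall_domain_iff_domain by (auto simp: domain_graph_vertex_iff)
qed

lemma mg_isomorphic_wall_domain_domain: "mg_isomorphic WDG DG"
proof (rule reach_embedding.mg_isomorphic_restrict[OF reach_embedding_domain_wall_domain])
  fix C assume C: "C \<in> morse_sets WDG"
  then obtain x where x: "x \<in> C" using morse_set_nonempty by blast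
  have "x \<in> fst WDG" using morse_set_subset_vertices[OF C] x by blast
  then consider (cell) \<kappa> where "x = Cell \<kappa>" "is_cell (Act \<union> Rep) \<theta> \<kappa>" | (face) \<tau> where "x = Face \<tau>"
    unfolding wall_domain_graph_vertex_iff by blast
  then show "C \<inter> fst DG \<noteq> {}"
  proof cases
    case cell
    then show ?thesis using x by (auto simp: domain_graph_vertex_iff)
  next
    case face
    obtain y where "(x, y) \<in> snd WDG" "y \<in> C" using morse_set_successor[OF C x] .
    with face show ?thesis
      by (fastforce simp: wall_domain_graph_edge_iff domain_graph_vertex_iff entrance_def
          dest: wall_is_cell)
  qed
qed

lemma wall_edge_wall_domain_trancl: "snd WG \<subseteq> (snd WDG)\<^sup>+"
proof (rule subrelI)
  fix a b assume "(a, b) \<in> snd WG"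
  then consider (faces) \<tau> \<tau>' \<kappa> where "a = Face \<tau>" "b = Face \<tau>'" "ENT \<tau> \<kappa>" "ABS \<tau>' \<kappa>"
    | (loop) \<kappa> where "a = Cell \<kappa>" "b = Cell \<kappa>" "ATT \<kappa>"
    | (enter) \<tau> \<kappa> k j s where "a = Face \<tau>" "b = Cell \<kappa>" "ATT \<kappa>" "wall (Act \<union> Rep) \<theta> \<tau> \<kappa> k j s"
    unfolding wall_graph_edge_iff by blast
  then show "(a, b) \<in> (snd WDG)\<^sup>+"
  proof cases
    case faces
    then have "(a, Cell \<kappa>) \<in> snd WDG" "(Cell \<kappa>, b) \<in> snd WDG"
      by (auto simp: wall_domain_graph_edge_iff)
    then show ?thesis by auto
  next
    case loop
    then show ?thesis by (auto simp: wall_domain_graph_edge_iff)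
  next
    case enter
    then have "ENT \<tau> \<kappa>" by (blast intro: entrance_if_attracting)
    then show ?thesis using enter by (auto simp: wall_domain_graph_edge_iff)
  qed
qed

lemma wall_trancl_to_cell_attracting: "(x, Cell \<kappa>) \<in> (snd WG)\<^sup>+ \<Longrightarrow> ATT \<kappa>"
  by (auto simp: wall_graph_edge_iff dest: tranclD2)

lemma wall_domain_trancl_from_wall_vertex:
  assumes x: "x \<in> fst WG" and "(x, z) \<in> (snd WDG)\<^sup>+"
  shows "(x, z) \<in> (snd WG)\<^sup>+ \<or> (\<exists>\<tau> \<kappa>. z = Cell \<kappa> \<and> (x, Face \<tau>) \<in> (snd WG)\<^sup>* \<and> ENT \<tau> \<kappa>)"
  using assms(2)
proof (induction rule: trancl_induct)
  case (base z)
  then show ?case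
    using x not_absorbing_if_attracting
    by (auto simp: wall_domain_graph_edge_iff wall_graph_edge_iff wall_graph_vertex_iff)
next
  case (step y z)
  from step.hyps(2) consider (exit) \<kappa>1 \<tau> where "y = Cell \<kappa>1" "z = Face \<tau>" "ABS \<tau> \<kappa>1"
    | (enter) \<tau> \<kappa>1 where "y = Face \<tau>" "z = Cell \<kappa>1" "ENT \<tau> \<kappa>1"
    | (loop) \<kappa>1 where "y = Cell \<kappa>1" "z = Cell \<kappa>1"
    unfolding wall_domain_graph_edge_iff by blast
  then show ?case
  proof cases
    case exit
    then have "\<not> ATT \<kappa>1" using not_absorbing_if_attracting by blast
    then obtain \<tau>0 where "(x, Face \<tau>0) \<in> (snd WG)\<^sup>*" "ENT \<tau>0 \<kappa>1"
      using step.IH exit wall_trancl_to_cell_attracting by blast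
    moreover from this have "(Face \<tau>0, z) \<in> snd WG"
      using exit by (auto simp: wall_graph_edge_iff)
    ultimately show ?thesis by (auto intro: rtrancl_into_trancl1)
  next
    case enter
    then show ?thesis using step.IH by (auto intro: trancl_into_rtrancl)
  next
    case loop
    then show ?thesis using step.IH by simp
  qed
qed

lemma wall_trancl_iff_wall_domain:
  assumes x: "x \<in> fst WG" and y: "y \<in> fst WG"
  shows "(x, y) \<in> (snd WG)\<^sup>+ \<longleftrightarrow> (x, y) \<in> (snd WDG)\<^sup>+"
proof
  assume "(x, y) \<in> (snd WDG)\<^sup>+"
  then consider "(x, y) \<in> (snd WG)\<^sup>+"
    | \<tau> \<kappa> where "y = Cell \<kappa>" "(x, Face \<tau>) \<in> (snd WG)\<^sup>*" "ENT \<tau> \<kappa>"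
    using wall_domain_trancl_from_wall_vertex[OF x] by blast
  then show "(x, y) \<in> (snd WG)\<^sup>+"
  proof cases
    case 2
    then have "(Face \<tau>, y) \<in> snd WG"
      using y by (auto simp: wall_graph_edge_iff wall_graph_vertex_iff entrance_def)
    then show ?thesis by (rule rtrancl_into_trancl1[OF 2(2)])
  qed
qed (use trancl_subset_trancl[OF wall_edge_wall_domain_trancl] in blast)

lemma reach_embedding_wall_wall_domain: "reach_embedding WG WDG"
  using wall_graph_edges_in_vertices wall_domain_graph_edges_in_vertices wall_trancl_iff_wall_domain
  by (rule reach_embedding.intro)

lemma mg_isomorphic_wall_wall_domain: "mg_isomorphic WG WDG"
proof (rule mg_isomorphic_sym, rule reach_embedding.mg_isomorphic_restrict[OF reach_embedding_wall_wall_domain])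
  fix C assume C: "C \<in> morse_sets WDG"
  then obtain x where x: "x \<in> C" using morse_set_nonempty by blast
  have "x \<in> fst WDG" using morse_set_subset_vertices[OF C] x by blast
  then consider (face) \<tau> where "x = Face \<tau>" "is_face (Act \<union> Rep) \<theta> \<tau>"
    | (attracting) \<kappa> where "x = Cell \<kappa>" "ATT \<kappa>"
    | (transient) \<kappa> where "x = Cell \<kappa>" "\<not> ATT \<kappa>"
    unfolding wall_domain_graph_vertex_iff by blast
  then show "C \<inter> fst WG \<noteq> {}"
  proof cases
    case transient
    obtain y where "(x, y) \<in> snd WDG" "y \<in> C" using morse_set_successor[OF C x] .
    with transient show ?thesis
      by (fastforce simp: wall_domain_graph_edge_iff wall_graph_vertex_iff absorbing_def
          dest: wall_is_face)
  qed (use x in \<open>auto simp: wall_graph_vertex_iff\<close>)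
qed

end

theorem proposition3p15:
  fixes Act Rep :: "('v::finite \<times> 'v) set"
    and M :: "'v \<Rightarrow> 'v lexpr"
    and l u \<theta> :: "'v \<Rightarrow> 'v \<Rightarrow> real"
    and \<gamma> :: "'v \<Rightarrow> real"
  assumes "reg_network Act Rep M"
    and "regular_param Act Rep M l u \<theta> \<gamma>"
  shows "mg_isomorphic (wall_graph Act Rep M l u \<theta> \<gamma>) (wall_domain_graph Act Rep M l u \<theta> \<gamma>)
       \<and> mg_isomorphic (wall_domain_graph Act Rep M l u \<theta> \<gamma>) (domain_graph Act Rep M l u \<theta> \<gamma>)
       \<and> mg_isomorphic (wall_graph Act Rep M l u \<theta> \<gamma>) (domain_graph Act Rep M l u \<theta> \<gamma>)"
proof -
  interpret switching_system Act Rep M l u \<theta> \<gamma>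
    using assms(2) by unfold_locales (simp add: regular_param_def)
  show ?thesis
    using mg_isomorphic_wall_wall_domain mg_isomorphic_wall_domain_domain
    by (blast intro: mg_isomorphic_trans)
qed

end
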